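(* Let $\Sigma$ be a predictive theory and $A \Rightarrow B$ a predictive formula. Put $\Sigma_{A}^B = \{E+i \Rightarrow F+i \mid E \Rightarrow F \in \Sigma,\ i \in \mathbb{Z},\ l(A)-l(E) \leq i \leq u(B)-l(F)\}$. Then $\Sigma \vdash A \Rightarrow B$ if and only if $\Sigma_{A}^B \vdash_\mathcal{R} A \Rightarrow B$, where $\mathcal{R}$ is the deduction system consisting of (Ax) and (Cut).
   Context: $Y$ is a non-empty finite set of attributes and $\mathcal{T}_Y = \{y^i \mid y \in Y, i \in \mathbb{Z}\}$; $M + j = \{y^{i+j} \mid y^i \in M\}$. A formula is $A \Rightarrow B$ with $A,B$ finite subsets of $\mathcal{T}_Y$; a theory is a set of formulas. For finite non-empty $M \subseteq \mathcal{T}_Y$, $l(M) = \min\{i \mid y^i \in M\}$ and $u(M) = \max\{i \mid y^i \in M\}$. A formula $A \Rightarrow B$ is predictive if $A \neq \emptyset$, $B \neq \emptyset$ and $i \leq j$ for all $x^i \in A$, $y^j \in B$ (equivalently $u(A) \le l(B)$); a theory is predictive if all its formulas are. Deduction rules (for arbitrary finite $A,B,C,D \subseteq \mathcal{T}_Y$, $i \in \mathbb{Z}$): (Ax) infer $A \cup B \Rightarrow A$; (Cut) from $A \Rightarrow B$ and $B \cup C \Rightarrow D$ infer $A \cup C \Rightarrow D$; (Shf) from $A \Rightarrow B$ infer $A+i \Rightarrow B+i$. For a set of rules $\mathcal{R}$, $\Sigma \vdash_\mathcal{R} A \Rightarrow B$ means there is a finite sequence ending with $A \Rightarrow B$ each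 member of which is in $\Sigma$ or follows from earlier members by a rule of $\mathcal{R}$; $\vdash$ denotes $\vdash_\mathcal{R}$ for $\mathcal{R}$ = \{(Ax), (Cut), (Shf)\}. *)

theory Defs
  imports Main
begin

(* Attributes: elements of a type 'y, Y = UNIV :: 'y set, assumed finite (nonempty automatically).
   Terms y^i are pairs (y, i) :: 'y \<times> int. *)

type_synonym 'y tm = "'y \<times> int"
type_synonym 'y fml = "'y tm set \<times> 'y tm set"

definition shift :: "'y tm set \<Rightarrow> int \<Rightarrow> 'y tm set" where
  "shift M j = (\<lambda>(y, i). (y, i + j)) ` M"

definition lo :: "'y tm set \<Rightarrow> int" where
  "lo M = Min (snd ` M)"

definition up :: "'y tm set \<Rightarrow> int" where
  "up M = Max (snd ` M)"

definition is_formula :: "'y fml \<Rightarrow> bool" where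
  "is_formula \<phi> \<longleftrightarrow> finite (fst \<phi>) \<and> finite (snd \<phi>)"

definition is_theory :: "'y fml set \<Rightarrow> bool" where
  "is_theory \<Sigma> \<longleftrightarrow> (\<forall>\<phi>\<in>\<Sigma>. is_formula \<phi>)"

definition predictive :: "'y fml \<Rightarrow> bool" where
  "predictive \<phi> \<longleftrightarrow> (case \<phi> of (A, B) \<Rightarrow>
     A \<noteq> {} \<and> B \<noteq> {} \<and> (\<forall>x i y j. (x, i) \<in> A \<longrightarrow> (y, j) \<in> B \<longrightarrow> i \<le> j))"

definition predictive_theory :: "'y fml set \<Rightarrow> bool" where
  "predictive_theory \<Sigma> \<longleftrightarrow> (\<forall>\<phi>\<in>\<Sigma>. predictive \<phi>)"

(* The flag shf says whether (Shf) is among the rules: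
   derives True  \<Sigma> = \<turnstile>   with rules {Ax, Cut, Shf}
   derives False \<Sigma> = \<turnstile>_R with rules {Ax, Cut}.
   The inductive closure coincides with existence of a finite derivation sequence. *)
inductive derives :: "bool \<Rightarrow> 'y fml set \<Rightarrow> 'y fml \<Rightarrow> bool" for shf :: bool and \<Sigma> :: "'y fml set" where
  hyp: "\<phi> \<in> \<Sigma> \<Longrightarrow> derives shf \<Sigma> \<phi>"
| ax: "finite A \<Longrightarrow> finite B \<Longrightarrow> derives shf \<Sigma> (A \<union> B, A)"
| cut: "finite A \<Longrightarrow> finite B \<Longrightarrow> finite C \<Longrightarrow> finite D \<Longrightarrow>
        derives shf \<Sigma> (A, B) \<Longrightarrow> derives shf \<Sigma> (B \<union> C, D) \<Longrightarrow> derives shf \<Sigma> (A \<union> C, D)"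
| shf: "shf \<Longrightarrow> finite A \<Longrightarrow> finite B \<Longrightarrow> derives shf \<Sigma> (A, B) \<Longrightarrow>
        derives shf \<Sigma> (shift A i, shift B i)"

definition restricted :: "'y fml set \<Rightarrow> 'y tm set \<Rightarrow> 'y tm set \<Rightarrow> 'y fml set" where
  "restricted \<Sigma> A B = {(shift E i, shift F i) | E F i.
      (E, F) \<in> \<Sigma> \<and> lo A - lo E \<le> i \<and> i \<le> up B - lo F}"

end

theory Submission
  imports Defs
begin

(* Let K be the set of terms t with A \<Rightarrow> {t} derivable from the restricted theory by (Ax) and
   (Cut). K contains A, is closed under the restricted formulas, and, since these are predictive
   and start at or after l(A), lies at or after l(A). Now put M = K \<union> {terms after u(B)}. For a
   shifted formula E+i \<Rightarrow> F+i of \<Sigma> with E+i \<subseteq> M, either F+i lies after u(B), or E+i lies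
   before u(B), hence inside K and so after l(A), and then the shift is in the admissible range
   and F+i \<subseteq> K. So M is closed under all shifts of \<Sigma>, which is sound for (Ax), (Cut), (Shf);
   as A \<subseteq> M, also B \<subseteq> M, i.e. B \<subseteq> K, which is the derivation required.
   Conversely every restricted formula is a shift of a formula of \<Sigma>. *)

lemma mem_shift_iff: "(y, k) \<in> shift X j \<longleftrightarrow> (y, k - j) \<in> X"
  unfolding shift_def by (force simp: image_iff)

lemma shift_Un: "shift (X \<union> Y) j = shift X j \<union> shift Y j"
  unfolding shift_def by (rule image_Un)

lemma shift_shift: "shift (shift X i) j = shift X (i + j)"
  unfolding shift_def by (force simp: image_iff add.assoc)

lemma finite_shift: "finite X \<Longrightarrow> finite (shift X j)"
  unfolding shift_def by simp

lemma shift_0: "shift X 0 = X"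
  unfolding shift_def by (force simp: image_iff)

lemma lo_le: "finite M \<Longrightarrow> (y, j) \<in> M \<Longrightarrow> lo M \<le> j"
  unfolding lo_def by (metis Min_le finite_imageI image_eqI snd_conv)

lemma lo_attained:
  assumes "finite M" "M \<noteq> {}"
  obtains y where "(y, lo M) \<in> M"
proof -
  have "lo M \<in> snd ` M" unfolding lo_def using assms by (intro Min_in) auto
  then show ?thesis using that by force
qed

lemma up_ge: "finite M \<Longrightarrow> (y, j) \<in> M \<Longrightarrow> j \<le> up M"
  unfolding up_def by (metis Max_ge finite_imageI image_eqI snd_conv)

lemma is_theoryD: "is_theory \<Sigma> \<Longrightarrow> (E, F) \<in> \<Sigma> \<Longrightarrow> finite E \<and> finite F"
  unfolding is_theory_def is_formula_def by force

lemma predictive_theoryD: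
  "predictive_theory \<Sigma> \<Longrightarrow> (E, F) \<in> \<Sigma> \<Longrightarrow>
     E \<noteq> {} \<and> F \<noteq> {} \<and> (\<forall>x i y j. (x, i) \<in> E \<longrightarrow> (y, j) \<in> F \<longrightarrow> i \<le> j)"
  unfolding predictive_theory_def predictive_def by force

lemma restrictedE:
  assumes "(X, Y) \<in> restricted \<Sigma> A B"
  obtains E F i where "(E, F) \<in> \<Sigma>" "X = shift E i" "Y = shift F i"
    "lo A - lo E \<le> i" "i \<le> up B - lo F"
  using assms unfolding restricted_def by auto

lemma restrictedI:
  "(E, F) \<in> \<Sigma> \<Longrightarrow> lo A - lo E \<le> i \<Longrightarrow> i \<le> up B - lo F \<Longrightarrow>
     (shift E i, shift F i) \<in> restricted \<Sigma> A B"
  unfolding restricted_def by blast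

lemma is_theory_restricted: "is_theory \<Sigma> \<Longrightarrow> is_theory (restricted \<Sigma> A B)"
  unfolding is_theory_def is_formula_def restricted_def
  by (auto dest: is_theoryD[unfolded is_theory_def is_formula_def] simp: finite_shift)

definition closed_under :: "'y fml set \<Rightarrow> 'y tm set \<Rightarrow> bool" where
  "closed_under \<Gamma> M \<longleftrightarrow> (\<forall>(E, F) \<in> \<Gamma>. E \<subseteq> M \<longrightarrow> F \<subseteq> M)"

definition shift_closed_under :: "'y fml set \<Rightarrow> 'y tm set \<Rightarrow> bool" where
  "shift_closed_under \<Gamma> M \<longleftrightarrow> (\<forall>(E, F) \<in> \<Gamma>. \<forall>i. shift E i \<subseteq> M \<longrightarrow> shift F i \<subseteq> M)"

lemma closed_underI:
  "(\<And>E F. (E, F) \<in> \<Gamma> \<Longrightarrow> E \<subseteq> M \<Longrightarrow> F \<subseteq> M) \<Longrightarrow> closed_under \<Gamma> M"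
  unfolding closed_under_def by blast

lemma shift_closed_underI:
  "(\<And>E F i. (E, F) \<in> \<Gamma> \<Longrightarrow> shift E i \<subseteq> M \<Longrightarrow> shift F i \<subseteq> M) \<Longrightarrow>
     shift_closed_under \<Gamma> M"
  unfolding shift_closed_under_def by blast

lemma derives_sound:
  assumes "derives False \<Gamma> (X, Y)" "closed_under \<Gamma> M" "X \<subseteq> M"
  shows "Y \<subseteq> M"
proof -
  have "fst \<phi> \<subseteq> M \<longrightarrow> snd \<phi> \<subseteq> M" if "derives False \<Gamma> \<phi>" for \<phi>
    using that
  proof induction
    case (hyp \<phi>)
    then show ?case using assms(2) unfolding closed_under_def by (cases \<phi>) fastforce
  qed auto
  then show ?thesis using assms by fastforce
qed

lemma derives_shift_sound:
  assumes "derives s \<Gamma> (X, Y)" "shift_closed_under \<Gamma> M" "X \<subseteq> M"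
  shows "Y \<subseteq> M"
proof -
  have "\<forall>j. shift (fst \<phi>) j \<subseteq> M \<longrightarrow> shift (snd \<phi>) j \<subseteq> M" if "derives s \<Gamma> \<phi>" for \<phi>
    using that
  proof induction
    case (hyp \<phi>)
    then show ?case using assms(2) unfolding shift_closed_under_def by (cases \<phi>) fastforce
  qed (auto simp: shift_Un shift_shift)
  then have "shift X 0 \<subseteq> M \<longrightarrow> shift Y 0 \<subseteq> M" using assms(1) by fastforce
  then show ?thesis using assms(3) by (simp add: shift_0)
qed

lemma derives_trans:
  assumes "derives s \<Gamma> (A, Y)" "derives s \<Gamma> (A \<union> Y, Z)" "finite A" "finite Y" "finite Z"
  shows "derives s \<Gamma> (A, Z)"
  using derives.cut[OF assms(3,4,3,5,1)] assms(2) by (simp add: Un_commute)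

lemma derives_Un:
  assumes "derives s \<Gamma> (A, Y)" "derives s \<Gamma> (A, Z)" "finite A" "finite Y" "finite Z"
  shows "derives s \<Gamma> (A, Y \<union> Z)"
proof -
  have "derives s \<Gamma> ((Y \<union> Z) \<union> {}, Y \<union> Z)"
    using assms by (intro derives.ax) auto
  then have "derives s \<Gamma> (A \<union> Y, Y \<union> Z)"
    using derives.cut[OF assms(3,5,4) _ assms(2), of "Y \<union> Z"] assms by (simp add: Un_commute)
  then show ?thesis using derives_trans[OF assms(1)] assms by simp
qed

lemma derives_singleton:
  assumes "derives s \<Gamma> (A, F)" "t \<in> F" "finite A" "finite F"
  shows "derives s \<Gamma> (A, {t})"
proof -
  have "derives s \<Gamma> (F \<union> {}, {t})"
    using derives.ax[of "{t}" F s \<Gamma>] assms by (simp add: insert_absorb)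
  from derives.cut[OF assms(3,4) _ _ assms(1) this] show ?thesis by simp
qed

lemma derives_iff_singletons:
  assumes "finite A" "finite Y"
  shows "derives s \<Gamma> (A, Y) \<longleftrightarrow> (\<forall>t\<in>Y. derives s \<Gamma> (A, {t}))"
proof
  show "derives s \<Gamma> (A, Y) \<Longrightarrow> \<forall>t\<in>Y. derives s \<Gamma> (A, {t})"
    using derives_singleton assms by blast
  show "\<forall>t\<in>Y. derives s \<Gamma> (A, {t}) \<Longrightarrow> derives s \<Gamma> (A, Y)"
    using assms(2)
  proof (induction Y rule: finite_induct)
    case empty
    then show ?case using derives.ax[of "{}" A s \<Gamma>] assms(1) by simp
  next
    case (insert t Y)
    then show ?case using derives_Un[of s \<Gamma> A "{t}" Y] assms(1) by simp
  qed
qed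

lemma derives_from_derived_hyps:
  assumes "derives False \<Gamma> \<phi>" "\<And>\<psi>. \<psi> \<in> \<Gamma> \<Longrightarrow> derives s \<Sigma> \<psi>"
  shows "derives s \<Sigma> \<phi>"
  using assms
proof induction
  case (cut A B C D)
  then show ?case by (simp add: derives.cut)
qed (auto intro: derives.ax derives.hyp)

definition consequences :: "'y fml set \<Rightarrow> 'y tm set \<Rightarrow> 'y tm set" where
  "consequences \<Gamma> A = {t. derives False \<Gamma> (A, {t})}"

lemma derives_iff_subset_consequences:
  assumes "finite A" "finite Y"
  shows "derives False \<Gamma> (A, Y) \<longleftrightarrow> Y \<subseteq> consequences \<Gamma> A"
  using derives_iff_singletons[OF assms, of False \<Gamma>] unfolding consequences_def by blast

lemma subset_consequences:
  assumes "finite A"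
  shows "A \<subseteq> consequences \<Gamma> A"
proof -
  have "derives False \<Gamma> (A, A)" using derives.ax[of A "{}" False \<Gamma>] assms by simp
  then show ?thesis using assms by (simp add: derives_iff_subset_consequences)
qed

lemma closed_under_consequences:
  assumes "is_theory \<Gamma>" "finite A"
  shows "closed_under \<Gamma> (consequences \<Gamma> A)"
proof (rule closed_underI)
  fix E F assume EF: "(E, F) \<in> \<Gamma>" and "E \<subseteq> consequences \<Gamma> A"
  have fin: "finite E" "finite F" using is_theoryD[OF assms(1) EF] by auto
  have "derives False \<Gamma> (A, E)"
    using \<open>E \<subseteq> _\<close> assms(2) fin by (simp add: derives_iff_subset_consequences)
  moreover have "derives False \<Gamma> (E \<union> {}, F)" using EF by (simp add: derives.hyp)
  ultimately have "derives False \<Gamma> (A \<union> {}, F)"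
    using derives.cut[OF assms(2) fin(1) _ fin(2)] by blast
  then show "F \<subseteq> consequences \<Gamma> A"
    using assms(2) fin by (simp add: derives_iff_subset_consequences)
qed

lemma consequences_restricted_lower_bound:
  assumes "predictive_theory \<Sigma>" "is_theory \<Sigma>" "finite A"
    and "(y, k) \<in> consequences (restricted \<Sigma> A B) A"
  shows "lo A \<le> k"
proof -
  let ?M = "{t. lo A \<le> snd t}"
  have closed: "closed_under (restricted \<Sigma> A B) ?M"
  proof (intro closed_underI subsetI)
    fix X Y t assume XY: "(X, Y) \<in> restricted \<Sigma> A B" and "t \<in> Y"
    obtain z j where t: "t = (z, j)" by fastforce
    from XY obtain E F i where EF: "(E, F) \<in> \<Sigma>" "Y = shift F i" "lo A - lo E \<le> i"
      by (auto elim: restrictedE)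
    obtain x where "(x, lo E) \<in> E"
      using lo_attained is_theoryD[OF assms(2) EF(1)] predictive_theoryD[OF assms(1) EF(1)]
      by metis
    moreover have "(z, j - i) \<in> F" using \<open>t \<in> Y\<close> EF(2) t by (simp add: mem_shift_iff)
    ultimately have "lo E \<le> j - i" using predictive_theoryD[OF assms(1) EF(1)] by blast
    then show "t \<in> ?M" using EF(3) t by simp
  qed
  have "A \<subseteq> ?M" using lo_le[OF assms(3)] by auto
  moreover have "derives False (restricted \<Sigma> A B) (A, {(y, k)})"
    using assms(4) by (simp add: consequences_def)
  ultimately have "{(y, k)} \<subseteq> ?M" using derives_sound[OF _ closed] by blast
  then show ?thesis by simp
qed

lemma shift_closed_consequences_or_after:
  assumes "predictive_theory \<Sigma>" "is_theory \<Sigma>" "finite A"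
  shows "shift_closed_under \<Sigma> (consequences (restricted \<Sigma> A B) A \<union> {t. up B < snd t})"
    (is "shift_closed_under \<Sigma> (?K \<union> ?After)")
proof (rule shift_closed_underI)
  fix E F i assume EF: "(E, F) \<in> \<Sigma>" and sub: "shift E i \<subseteq> ?K \<union> ?After"
  have fin: "finite E" "finite F" using is_theoryD[OF assms(2) EF] by auto
  have pred: "E \<noteq> {}" "F \<noteq> {}" "\<And>x k y j. (x, k) \<in> E \<Longrightarrow> (y, j) \<in> F \<Longrightarrow> k \<le> j"
    using predictive_theoryD[OF assms(1) EF] by auto
  show "shift F i \<subseteq> ?K \<union> ?After"
  proof (cases "up B < lo F + i")
    case True
    have "up B < j" if "(z, j) \<in> shift F i" for z j
      using lo_le[OF fin(2), of z "j - i"] that True by (simp add: mem_shift_iff)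
    then show ?thesis by auto
  next
    case False
    obtain w where w: "(w, lo F) \<in> F" using lo_attained fin(2) pred(2) by metis
    have EK: "shift E i \<subseteq> ?K"
    proof clarify
      fix z j assume "(z, j) \<in> shift E i"
      moreover have "j - i \<le> lo F"
        using pred(3) w \<open>(z, j) \<in> shift E i\<close> by (simp add: mem_shift_iff)
      ultimately show "(z, j) \<in> ?K" using sub False by auto
    qed
    obtain x where "(x, lo E) \<in> E" using lo_attained fin(1) pred(1) by metis
    then have "(x, lo E + i) \<in> ?K" using EK by (auto simp: mem_shift_iff)
    then have "lo A - lo E \<le> i"
      using consequences_restricted_lower_bound[OF assms] by fastforce
    then have "(shift E i, shift F i) \<in> restricted \<Sigma> A B"
      using False EF by (intro restrictedI) auto
    then have "shift F i \<subseteq> ?K"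
      using closed_under_consequences[OF is_theory_restricted[OF assms(2)] assms(3)] EK
      unfolding closed_under_def by blast
    then show ?thesis by blast
  qed
qed

theorem theorem14:
  fixes \<Sigma> :: "('y::finite) fml set" and A B :: "'y tm set"
  assumes "is_theory \<Sigma>" and "predictive_theory \<Sigma>"
    and "finite A" and "finite B" and "predictive (A, B)"
  shows "derives True \<Sigma> (A, B) \<longleftrightarrow> derives False (restricted \<Sigma> A B) (A, B)"
proof
  let ?K = "consequences (restricted \<Sigma> A B) A"
  assume "derives True \<Sigma> (A, B)"
  moreover have "A \<subseteq> ?K \<union> {t. up B < snd t}" using subset_consequences[OF assms(3)] by blast
  ultimately have "B \<subseteq> ?K \<union> {t. up B < snd t}"
    by (rule derives_shift_sound[OF _ shift_closed_consequences_or_after[OF assms(2,1,3)]])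
  then have "B \<subseteq> ?K" using up_ge[OF assms(4)] by fastforce
  then show "derives False (restricted \<Sigma> A B) (A, B)"
    using assms(3,4) by (simp add: derives_iff_subset_consequences)
next
  assume "derives False (restricted \<Sigma> A B) (A, B)"
  then show "derives True \<Sigma> (A, B)"
  proof (rule derives_from_derived_hyps)
    fix \<psi> assume "\<psi> \<in> restricted \<Sigma> A B"
    then obtain E F i where "(E, F) \<in> \<Sigma>" "\<psi> = (shift E i, shift F i)"
      by (metis restrictedE surj_pair)
    then show "derives True \<Sigma> \<psi>"
      using is_theoryD[OF assms(1)] by (auto intro: derives.hyp derives.shf)
  qed
qed

end
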